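(* For every positive integer $N$ there exists a real symmetric nonnegative matrix $A$ of rank $3$ having exactly one negative eigenvalue (counted with multiplicity) whose nonnegative rank exceeds $N$.
   Context: The nonnegative rank of an $m\times n$ matrix $A$ with nonnegative real entries is the smallest integer $r$ such that $A=UV$ for some $m\times r$ matrix $U$ and $r\times n$ matrix $V$, both with nonnegative real entries. *)

theory Defs
  imports "Jordan_Normal_Form.DL_Rank" "Jordan_Normal_Form.Char_Poly"
begin

definition nonneg_mat :: "real mat \<Rightarrow> bool" where
  "nonneg_mat A \<longleftrightarrow> (\<forall>i < dim_row A. \<forall>j < dim_col A. A $$ (i, j) \<ge> 0)"

definition nonneg_rank :: "real mat \<Rightarrow> nat" where
  "nonneg_rank A = (LEAST r. \<exists>U V. U \<in> carrier_mat (dim_row A) r \<and> V \<in> carrier_mat r (dim_col A)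
      \<and> nonneg_mat U \<and> nonneg_mat V \<and> A = U * V)"

definition real_rank :: "real mat \<Rightarrow> nat" where
  "real_rank A = vec_space.rank (dim_row A) A"

definition num_neg_eigenvalues :: "real mat \<Rightarrow> nat" where
  "num_neg_eigenvalues A = (\<Sum>x\<in>{x. x < 0 \<and> eigenvalue A x}. order x (char_poly A))"

end

(*
  Take the points t_i = i - m (i = 0, ..., 2m) and A = ((t_i + t_j)^2). Expanding the square
  factors A = X Y through R^3, with X the rows (1, t_i, t_i^2) and Y the columns
  (t_j^2, 2 t_j, 1); so A has rank 3, and by Sylvester's determinant identity its nonzero
  eigenvalues are those of the 3x3 matrix Y X. The odd power sums of the t_i vanish, so Y X has
  characteristic polynomial (x - 2P)((x - P)^2 - nQ) with P = sum t_i^2, Q = sum t_i^4, n = 2m+1,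
  and the strict Cauchy-Schwarz inequality P^2 < nQ leaves exactly one negative root.
  Finally A_ij = 0 iff t_j = -t_i, so the 2m+1 rows of A have pairwise distinct zero patterns.
  In a nonnegative factorization A = U V the zero pattern of row i of A is determined by the
  support of row i of U, so 2m+1 <= 2^r for the nonnegative rank r; take m = 2^N.
*)

theory Submission
  imports Defs "Jordan_Normal_Form.DL_Rank_Submatrix"
begin

lemma det_smult_one_minus_mult_commute:
  fixes X :: "'a::field mat"
  assumes X: "X \<in> carrier_mat n k" and Y: "Y \<in> carrier_mat k n" and x: "x \<noteq> 0"
  shows "x ^ k * det (x \<cdot>\<^sub>m 1\<^sub>m n - X * Y) = x ^ n * det (x \<cdot>\<^sub>m 1\<^sub>m k - Y * X)"
proof -
  \<comment> \<open>factor ?M into block-triangular matrices in two ways\<close>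
  let ?M = "four_block_mat (x \<cdot>\<^sub>m 1\<^sub>m n) X Y (1\<^sub>m k)"
  let ?L1 = "four_block_mat (1\<^sub>m n) X (0\<^sub>m k n) (1\<^sub>m k)"
  let ?R1 = "four_block_mat (x \<cdot>\<^sub>m 1\<^sub>m n - X * Y) (0\<^sub>m n k) Y (1\<^sub>m k)"
  let ?L2 = "four_block_mat (1\<^sub>m n) (0\<^sub>m n k) (inverse x \<cdot>\<^sub>m Y) (1\<^sub>m k)"
  let ?R2 = "four_block_mat (x \<cdot>\<^sub>m 1\<^sub>m n) X (0\<^sub>m k n) (1\<^sub>m k - inverse x \<cdot>\<^sub>m (Y * X))"
  have XY: "X * Y \<in> carrier_mat n n" and YX: "Y * X \<in> carrier_mat k k" using X Y by auto
  have L1: "?L1 \<in> carrier_mat (n+k) (n+k)" and R1: "?R1 \<in> carrier_mat (n+k) (n+k)"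
    and L2: "?L2 \<in> carrier_mat (n+k) (n+k)" and R2: "?R2 \<in> carrier_mat (n+k) (n+k)"
    using X Y XY YX by auto
  have "?M = ?L1 * ?R1"
    using X Y XY by (subst mult_four_block_mat[of _ n n _ k]) auto
  moreover have "det ?L1 = 1"
    using det_four_block_mat_lower_left_zero[of "1\<^sub>m n" n X k "0\<^sub>m k n" "1\<^sub>m k"] X by simp
  moreover have "det ?R1 = det (x \<cdot>\<^sub>m 1\<^sub>m n - X * Y)"
    using det_four_block_mat_upper_right_zero[of "x \<cdot>\<^sub>m 1\<^sub>m n - X * Y" n "0\<^sub>m n k" k Y "1\<^sub>m k"] XY Y
    by (simp add: minus_carrier_mat)
  ultimately have detXY: "det ?M = det (x \<cdot>\<^sub>m 1\<^sub>m n - X * Y)"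
    by (simp add: det_mult[OF L1 R1])
  have "?M = ?L2 * ?R2"
    using X Y YX x by (subst mult_four_block_mat[of _ n n _ k]) auto
  moreover have "det ?L2 = 1"
    using det_four_block_mat_upper_right_zero[of "1\<^sub>m n" n "0\<^sub>m n k" k "inverse x \<cdot>\<^sub>m Y" "1\<^sub>m k"] Y
    by simp
  moreover have "det ?R2 = x ^ n * det (1\<^sub>m k - inverse x \<cdot>\<^sub>m (Y * X))"
    using det_four_block_mat_lower_left_zero[of "x \<cdot>\<^sub>m 1\<^sub>m n" n X k "0\<^sub>m k n"] X YX
    by (simp add: minus_carrier_mat)
  ultimately have "det ?M = x ^ n * det (1\<^sub>m k - inverse x \<cdot>\<^sub>m (Y * X))"
    by (simp add: det_mult[OF L2 R2])
  moreover have "x ^ k * det (1\<^sub>m k - inverse x \<cdot>\<^sub>m (Y * X)) = det (x \<cdot>\<^sub>m 1\<^sub>m k - Y * X)"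
  proof -
    have "x \<cdot>\<^sub>m (1\<^sub>m k - inverse x \<cdot>\<^sub>m (Y * X)) = x \<cdot>\<^sub>m 1\<^sub>m k - Y * X"
      using X Y x by (intro eq_matI) (auto simp: algebra_simps)
    then show ?thesis using det_smult[of x "1\<^sub>m k - inverse x \<cdot>\<^sub>m (Y * X)"] X by simp
  qed
  ultimately show ?thesis using detXY by (simp add: algebra_simps)
qed

lemma poly_char_poly:
  assumes "(A :: 'a::field mat) \<in> carrier_mat n n"
  shows "poly (char_poly A) x = det (x \<cdot>\<^sub>m 1\<^sub>m n - A)"
proof -
  have "- char_matrix A x = x \<cdot>\<^sub>m 1\<^sub>m n - A"
    using assms by (intro eq_matI) (auto simp: char_matrix_def)
  then show ?thesis using char_poly_matrix[OF assms] by simp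
qed

lemma char_poly_mult_commute:
  fixes X :: "'a::field_char_0 mat"
  assumes X: "X \<in> carrier_mat n k" and Y: "Y \<in> carrier_mat k n"
  shows "[:0, 1:] ^ k * char_poly (X * Y) = [:0, 1:] ^ n * char_poly (Y * X)"
proof -
  let ?p = "[:0, 1:] ^ k * char_poly (X * Y) - [:0, 1:] ^ n * char_poly (Y * X)"
  have "poly ?p x = 0" if "x \<noteq> 0" for x
  proof -
    have "poly (char_poly (X * Y)) x = det (x \<cdot>\<^sub>m 1\<^sub>m n - X * Y)"
      using X Y by (intro poly_char_poly) auto
    moreover have "poly (char_poly (Y * X)) x = det (x \<cdot>\<^sub>m 1\<^sub>m k - Y * X)"
      using X Y by (intro poly_char_poly) auto
    ultimately show ?thesis
      using det_smult_one_minus_mult_commute[OF X Y that] by (simp add: poly_power)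
  qed
  then have "UNIV - {0} \<subseteq> {x. poly ?p x = 0}" by auto
  moreover have "infinite (UNIV - {0 :: 'a})" by (simp add: infinite_UNIV_char_0)
  ultimately have "infinite {x. poly ?p x = 0}" using finite_subset by blast
  then have "?p = 0" using poly_roots_finite by blast
  then show ?thesis by simp
qed

lemma det_3:
  assumes "(A :: 'a::comm_ring_1 mat) \<in> carrier_mat 3 3"
  shows "det A = A$$(0,0) * (A$$(1,1) * A$$(2,2) - A$$(1,2) * A$$(2,1))
     - A$$(1,0) * (A$$(0,1) * A$$(2,2) - A$$(0,2) * A$$(2,1))
     + A$$(2,0) * (A$$(0,1) * A$$(1,2) - A$$(0,2) * A$$(1,1))"
proof -
  have det2: "det B = B$$(0,0) * B$$(1,1) - B$$(0,1) * B$$(1,0)" if "B \<in> carrier_mat 2 2" for B :: "'a mat"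
    using laplace_expansion_column[OF that, of 0] that
    by (simp add: cofactor_def mat_delete_def det_single numeral_2_eq_2 lessThan_Suc)
  show ?thesis
    using laplace_expansion_column[OF assms, of 0] assms
    by (simp add: cofactor_def det2 mat_delete_def lessThan_nat_numeral)
      (simp add: numeral_2_eq_2 algebra_simps)
qed

lemma rank_le_sum_product_entries:
  fixes A :: "'a::field mat"
  assumes "A \<in> carrier_mat n nc"
    and "\<And>i j. i < n \<Longrightarrow> j < nc \<Longrightarrow> A $$ (i, j) = (\<Sum>l<k. f l i * g l j)"
  shows "vec_space.rank n A \<le> k"
  using assms
proof (induction k arbitrary: A)
  case 0
  then have "A = 0\<^sub>m n nc" by (intro eq_matI) auto
  then show ?case using vec_space.rank_0I by simp
next
  case (Suc k)
  define B where "B = mat n nc (\<lambda>(i, j). \<Sum>l<k. f l i * g l j)"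
  define C where "C = mat n nc (\<lambda>(i, j). f k i * g k j)"
  have BC: "B \<in> carrier_mat n nc" "C \<in> carrier_mat n nc" unfolding B_def C_def by auto
  have "A = B + C" using Suc.prems by (intro eq_matI) (auto simp: B_def C_def)
  moreover have "vec_space.rank n B \<le> k" by (rule Suc.IH[OF BC(1)]) (simp add: B_def)
  moreover have "vec_space.rank n C \<le> 1"
    by (rule vec_space.rank_le_1_product_entries[OF BC(2)]) (simp add: C_def)
  ultimately show ?case using vec_space.rank_subadditive[OF BC] by simp
qed

lemma rank_mult_le_inner_dim:
  fixes X :: "'a::field mat"
  assumes "X \<in> carrier_mat n k" and "Y \<in> carrier_mat k nc"
  shows "vec_space.rank n (X * Y) \<le> k"
  using assms
  by (intro rank_le_sum_product_entries[where f = "\<lambda>l i. X $$ (i, l)" and g = "\<lambda>l j. Y $$ (l, j)"])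
    (auto simp: scalar_prod_def lessThan_atLeast0 intro!: sum.cong)

lemma pick_lessThan:
  assumes "i < k" shows "pick {..<k} i = i"
proof -
  have "{a \<in> {..<k}. a < i} = {..<i}" using assms by auto
  then show ?thesis using pick_card_in_set[of i "{..<k}"] assms by simp
qed

lemma rank_ge_leading_minor:
  fixes A :: "'a::field mat"
  assumes "A \<in> carrier_mat n n" and "k \<le> n"
    and "det (mat k k (\<lambda>(i, j). A $$ (i, j))) \<noteq> 0"
  shows "k \<le> vec_space.rank n A"
proof -
  have "{i. i < n \<and> i \<in> {..<k}} = {..<k}" using assms(2) by auto
  then have card: "card {i. i < n \<and> i \<in> {..<k}} = k" by simp
  have "submatrix A {..<k} {..<k} = mat k k (\<lambda>(i, j). A $$ (i, j))"
    using assms(1) card by (intro eq_matI) (auto simp: dim_submatrix submatrix_index pick_lessThan)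
  then show ?thesis
    using vec_space.rank_gt_minor[OF assms(1), of "{..<k}" "{..<k}"] assms(3) card by simp
qed

lemma nonneg_rank_factorization:
  assumes "nonneg_mat A"
  obtains U V where "U \<in> carrier_mat (dim_row A) (nonneg_rank A)"
    and "V \<in> carrier_mat (nonneg_rank A) (dim_col A)"
    and "nonneg_mat U" and "nonneg_mat V" and "A = U * V"
proof -
  let ?P = "\<lambda>r. \<exists>U V. U \<in> carrier_mat (dim_row A) r \<and> V \<in> carrier_mat r (dim_col A)
      \<and> nonneg_mat U \<and> nonneg_mat V \<and> A = U * V"
  have "?P (dim_col A)"
    using assms by (intro exI[of _ A] exI[of _ "1\<^sub>m (dim_col A)"]) (auto simp: nonneg_mat_def)
  then have "?P (nonneg_rank A)" unfolding nonneg_rank_def by (rule LeastI)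
  then show ?thesis using that by blast
qed

lemma mult_nonneg_mat_eq_0_iff:
  assumes "U \<in> carrier_mat n r" "V \<in> carrier_mat r nc" "nonneg_mat U" "nonneg_mat V"
    and "i < n" "j < nc"
  shows "(U * V) $$ (i, j) = 0 \<longleftrightarrow> (\<forall>l<r. U $$ (i, l) \<noteq> 0 \<longrightarrow> V $$ (l, j) = 0)"
proof -
  have "(U * V) $$ (i, j) = (\<Sum>l\<in>{0..<r}. U $$ (i, l) * V $$ (l, j))"
    using assms by (simp add: scalar_prod_def)
  moreover have "\<dots> = 0 \<longleftrightarrow> (\<forall>l\<in>{0..<r}. U $$ (i, l) * V $$ (l, j) = 0)"
    using assms by (intro sum_nonneg_eq_0_iff) (auto simp: nonneg_mat_def)
  ultimately show ?thesis by auto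
qed

lemma card_zero_patterns_le_two_pow_nonneg_rank:
  assumes "nonneg_mat A"
    and inj: "inj_on (\<lambda>i. {j. j < dim_col A \<and> A $$ (i, j) = 0}) {..<dim_row A}"
  shows "dim_row A \<le> 2 ^ nonneg_rank A"
proof -
  let ?r = "nonneg_rank A"
  obtain U V where U: "U \<in> carrier_mat (dim_row A) ?r" and V: "V \<in> carrier_mat ?r (dim_col A)"
    and "nonneg_mat U" "nonneg_mat V" and A: "A = U * V"
    using nonneg_rank_factorization[OF assms(1)] by blast
  define supp where "supp i = {l. l < ?r \<and> U $$ (i, l) \<noteq> 0}" for i
  have "{j. j < dim_col A \<and> A $$ (i, j) = 0} = {j. j < dim_col A \<and> (\<forall>l\<in>supp i. V $$ (l, j) = 0)}"
    if "i < dim_row A" for i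
    using mult_nonneg_mat_eq_0_iff[OF U V \<open>nonneg_mat U\<close> \<open>nonneg_mat V\<close> that] A
    by (auto simp: supp_def)
  then have "inj_on supp {..<dim_row A}"
    by (intro inj_onI inj_onD[OF inj]) auto
  moreover have "supp ` {..<dim_row A} \<subseteq> Pow {..<?r}" by (auto simp: supp_def)
  ultimately have "card {..<dim_row A} \<le> card (Pow {..<?r})" by (intro card_inj_on_le) auto
  then show ?thesis by (simp add: card_Pow)
qed

lemma sum_sum_diff_squares:
  fixes a :: "'b \<Rightarrow> 'a::comm_ring_1"
  shows "(\<Sum>x\<in>I. \<Sum>y\<in>I. (a x - a y)^2) = 2 * (of_nat (card I) * (\<Sum>x\<in>I. a x ^ 2) - (\<Sum>x\<in>I. a x) ^ 2)"
  by (simp add: power2_diff sum.distrib sum_subtractf sum_distrib_left sum_distrib_right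
      power2_eq_square sum_product algebra_simps)

lemma square_sum_less_card_mult_sum_squares:
  fixes a :: "'b \<Rightarrow> real"
  assumes "finite I" "x \<in> I" "y \<in> I" "a x \<noteq> a y"
  shows "(\<Sum>z\<in>I. a z) ^ 2 < card I * (\<Sum>z\<in>I. a z ^ 2)"
proof -
  have "0 < (\<Sum>y'\<in>I. (a x - a y')^2)"
    using assms by (intro sum_pos2[of _ y]) auto
  also have "\<dots> \<le> (\<Sum>x'\<in>I. \<Sum>y'\<in>I. (a x' - a y')^2)"
    using assms by (intro member_le_sum sum_nonneg) auto
  finally show ?thesis unfolding sum_sum_diff_squares by simp
qed

lemma sum_odd_power_antisym_eq_0:
  fixes t :: "nat \<Rightarrow> 'a::linordered_idom"
  assumes "\<And>i. i < n \<Longrightarrow> t (n - Suc i) = - t i" and "odd k"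
  shows "(\<Sum>i<n. t i ^ k) = 0"
proof -
  have "(\<Sum>i<n. t i ^ k) = (\<Sum>i<n. t (n - Suc i) ^ k)" by (rule sum.nat_diff_reindex[symmetric])
  also have "\<dots> = - (\<Sum>i<n. t i ^ k)"
    using assms by (simp add: sum_negf)
  finally show ?thesis by simp
qed

lemma num_neg_eigenvalues_eq_neg_roots:
  assumes A: "A \<in> carrier_mat n n"
    and eq: "[:0, 1:] ^ k * char_poly A = [:0, 1:] ^ n * q"
  shows "num_neg_eigenvalues A = (\<Sum>x\<in>{x. x < 0 \<and> poly q x = 0}. order x q)"
proof -
  have "char_poly A \<noteq> 0" using degree_monic_char_poly[OF A] by auto
  then have lhs0: "[:0, 1:] ^ k * char_poly A \<noteq> 0" by simp
  then have rhs0: "[:0, 1:] ^ n * q \<noteq> 0" using eq by simp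
  have root: "poly (char_poly A) x = 0 \<longleftrightarrow> poly q x = 0" if "x < 0" for x
    using arg_cong[OF eq, of "\<lambda>p. poly p x"] that by (auto simp: poly_power)
  have order: "order x (char_poly A) = order x q" if "x < 0" for x
  proof -
    have "order x ([:0, 1:] ^ j) = 0" for j :: nat using that by (intro order_0I) (simp add: poly_power)
    moreover have "order x ([:0, 1:] ^ k * char_poly A) = order x ([:0, 1:] ^ n * q)" using eq by simp
    ultimately show ?thesis unfolding order_mult[OF lhs0] order_mult[OF rhs0] by simp
  qed
  have "{x. x < 0 \<and> eigenvalue A x} = {x. x < 0 \<and> poly q x = 0}"
    using root eigenvalue_root_char_poly[OF A] by auto
  then show ?thesis unfolding num_neg_eigenvalues_def using order by (auto intro: sum.cong)
qed

lemma sum_order_neg_roots_cubic: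
  fixes a b c :: real
  assumes "0 \<le> a" "b < 0" "0 \<le> c"
  shows "(\<Sum>x\<in>{x. x < 0 \<and> poly ([:-a, 1:] * [:-b, 1:] * [:-c, 1:]) x = 0}.
      order x ([:-a, 1:] * [:-b, 1:] * [:-c, 1:])) = 1"
proof -
  have "poly ([:-a, 1:] * [:-b, 1:] * [:-c, 1:]) x = (x - a) * (x - b) * (x - c)" for x
    by (simp only: poly_mult) simp
  then have "{x. x < 0 \<and> poly ([:-a, 1:] * [:-b, 1:] * [:-c, 1:]) x = 0} = {b}"
    using assms by auto
  moreover have "order b ([:-a, 1:] * [:-b, 1:] * [:-c, 1:]) = 1"
  proof -
    have "order b [:-a, 1:] = 0" "order b [:-c, 1:] = 0" using assms by (auto intro: order_0I)
    moreover have "order b [:-b, 1:] = 1" using order_power_n_n[of b 1] by simp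
    ultimately show ?thesis by (subst order_mult, simp)+ simp
  qed
  ultimately show ?thesis by simp
qed

definition sq_sum_mat :: "nat \<Rightarrow> (nat \<Rightarrow> real) \<Rightarrow> real mat" where
  "sq_sum_mat n t = mat n n (\<lambda>(i, j). (t i + t j) ^ 2)"

lemma sq_sum_mat_factorization:
  "sq_sum_mat n t = mat n 3 (\<lambda>(i, l). t i ^ l) * mat 3 n (\<lambda>(l, j). of_nat (2 choose l) * t j ^ (2 - l))"
  by (intro eq_matI)
    (auto simp: sq_sum_mat_def scalar_prod_def numeral_3_eq_3 numeral_2_eq_2 power2_eq_square algebra_simps)

lemma char_poly_sq_sum_mat:
  fixes t :: "nat \<Rightarrow> real"
  assumes "(\<Sum>i<n. t i) = 0" and "(\<Sum>i<n. t i ^ 3) = 0"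
  defines "P \<equiv> \<Sum>i<n. t i ^ 2" and "s \<equiv> sqrt (n * (\<Sum>i<n. t i ^ 4))"
  shows "[:0, 1:] ^ 3 * char_poly (sq_sum_mat n t)
    = [:0, 1:] ^ n * ([:-(2 * P), 1:] * [:-(P - s), 1:] * [:-(P + s), 1:])"
proof -
  define X where "X = mat n 3 (\<lambda>(i, l). t i ^ l)"
  define Y where "Y = mat 3 n (\<lambda>(l, j). of_nat (2 choose l) * t j ^ (2 - l))"
  define p where "p k = (\<Sum>i<n. t i ^ k)" for k
  have X: "X \<in> carrier_mat n 3" and Y: "Y \<in> carrier_mat 3 n" by (simp_all add: X_def Y_def)
  \<comment> \<open>with vanishing odd power sums, Y * X = [[P, 0, p 4], [0, 2 P, 0], [n, 0, P]]\<close>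
  have YX: "Y * X = mat 3 3 (\<lambda>(l, l'). of_nat (2 choose l) * p (2 - l + l'))"
    by (intro eq_matI)
      (auto simp: X_def Y_def p_def scalar_prod_def sum_distrib_left power_add lessThan_atLeast0
        intro!: sum.cong)
  have p: "p 0 = n" "p 1 = 0" "p 2 = P" "p 3 = 0"
    using assms(1,2) by (simp_all add: p_def P_def)
  then have p_Suc: "p (Suc 0) = 0" "p (Suc (Suc 0)) = P" "p (Suc (Suc (Suc 0))) = 0"
    by (simp_all add: numeral_2_eq_2 numeral_3_eq_3)
  have s2: "s ^ 2 = n * p 4" unfolding s_def p_def by (simp add: sum_nonneg)
  have "poly (char_poly (Y * X)) x = poly ([:-(2 * P), 1:] * [:-(P - s), 1:] * [:-(P + s), 1:]) x" for x
  proof -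
    have "poly (char_poly (Y * X)) x = det (x \<cdot>\<^sub>m 1\<^sub>m 3 - Y * X)"
      using X Y by (intro poly_char_poly) auto
    also have "\<dots> = (x - 2 * P) * ((x - P) ^ 2 - s ^ 2)"
      unfolding YX s2 by (subst det_3) (auto simp: p p_Suc power2_eq_square algebra_simps)
    also have "\<dots> = poly ([:-(2 * P), 1:] * [:-(P - s), 1:] * [:-(P + s), 1:]) x"
      by (simp add: power2_eq_square algebra_simps)
    finally show ?thesis .
  qed
  then have "char_poly (Y * X) = [:-(2 * P), 1:] * [:-(P - s), 1:] * [:-(P + s), 1:]"
    using poly_eq_poly_eq_iff by blast
  then show ?thesis
    using char_poly_mult_commute[OF X Y] sq_sum_mat_factorization[of n t] by (simp add: X_def Y_def)
qed

lemma det_sq_sum_mat_3: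
  "det (sq_sum_mat 3 t) = - 2 * ((t 1 - t 0) * (t 2 - t 0) * (t 2 - t 1)) ^ 2"
  by (subst det_3) (auto simp: sq_sum_mat_def power2_eq_square algebra_simps)

lemma rank_sq_sum_mat:
  assumes "3 \<le> n" and "t 0 \<noteq> t 1" "t 0 \<noteq> t 2" "t 1 \<noteq> t 2"
  shows "vec_space.rank n (sq_sum_mat n t) = 3"
proof (rule antisym)
  show "vec_space.rank n (sq_sum_mat n t) \<le> 3"
    unfolding sq_sum_mat_factorization by (rule rank_mult_le_inner_dim) auto
  have "sq_sum_mat n t \<in> carrier_mat n n" by (simp add: sq_sum_mat_def)
  moreover have "mat 3 3 (\<lambda>(i, j). sq_sum_mat n t $$ (i, j)) = sq_sum_mat 3 t"
    using assms(1) by (intro eq_matI) (auto simp: sq_sum_mat_def)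
  moreover have "det (sq_sum_mat 3 t) \<noteq> 0" using assms(2-) by (simp add: det_sq_sum_mat_3)
  ultimately show "3 \<le> vec_space.rank n (sq_sum_mat n t)"
    using rank_ge_leading_minor[of "sq_sum_mat n t" n 3] assms(1) by simp
qed

lemma num_neg_eigenvalues_sq_sum_mat:
  assumes odd: "\<And>i. i < n \<Longrightarrow> t (n - Suc i) = - t i"
    and "i < n" "j < n" "t i ^ 2 \<noteq> t j ^ 2"
  shows "num_neg_eigenvalues (sq_sum_mat n t) = 1"
proof -
  define P where "P = (\<Sum>i<n. t i ^ 2)"
  define s where "s = sqrt (n * (\<Sum>i<n. t i ^ 4))"
  have "P ^ 2 < n * (\<Sum>i<n. t i ^ 4)"
    using square_sum_less_card_mult_sum_squares[of "{..<n}" i j "\<lambda>i. t i ^ 2"] assms(2-4)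
    by (simp add: P_def power_mult[symmetric])
  then have "\<bar>P\<bar> < s" unfolding s_def by (metis real_sqrt_abs real_sqrt_less_mono)
  moreover have "0 \<le> P" unfolding P_def by (simp add: sum_nonneg)
  ultimately have roots: "0 \<le> 2 * P" "P - s < 0" "0 \<le> P + s" by auto
  define q where "q = [:-(2 * P), 1:] * [:-(P - s), 1:] * [:-(P + s), 1:]"
  have "[:0, 1:] ^ 3 * char_poly (sq_sum_mat n t) = [:0, 1:] ^ n * q"
    unfolding q_def P_def s_def
    by (rule char_poly_sq_sum_mat)
      (use sum_odd_power_antisym_eq_0[of n t 1, OF odd] sum_odd_power_antisym_eq_0[of n t 3, OF odd] in simp_all)
  moreover have "sq_sum_mat n t \<in> carrier_mat n n" by (simp add: sq_sum_mat_def)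
  ultimately have "num_neg_eigenvalues (sq_sum_mat n t) = (\<Sum>x\<in>{x. x < 0 \<and> poly q x = 0}. order x q)"
    using num_neg_eigenvalues_eq_neg_roots by blast
  also have "\<dots> = 1" unfolding q_def by (rule sum_order_neg_roots_cubic[OF roots])
  finally show ?thesis .
qed

lemma nonneg_rank_sq_sum_mat:
  assumes odd: "\<And>i. i < n \<Longrightarrow> t (n - Suc i) = - t i" and inj: "inj_on t {..<n}"
  shows "n \<le> 2 ^ nonneg_rank (sq_sum_mat n t)"
proof -
  let ?A = "sq_sum_mat n t"
  have dim: "dim_row ?A = n" "dim_col ?A = n" by (simp_all add: sq_sum_mat_def)
  have zeros: "{j. j < n \<and> ?A $$ (i, j) = 0} = {n - Suc i}" if "i < n" for i
  proof -
    have "t j = t (n - Suc i) \<longleftrightarrow> j = n - Suc i" if "j < n" for j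
      using inj_onD[OF inj] \<open>i < n\<close> that by auto
    then show ?thesis using odd[OF that] that by (auto simp: sq_sum_mat_def add_eq_0_iff)
  qed
  have "nonneg_mat ?A" by (simp add: nonneg_mat_def sq_sum_mat_def)
  moreover have "inj_on (\<lambda>i. {j. j < dim_col ?A \<and> ?A $$ (i, j) = 0}) {..<dim_row ?A}"
    unfolding dim by (rule inj_onI) (auto simp: zeros)
  ultimately have "dim_row ?A \<le> 2 ^ nonneg_rank ?A" by (rule card_zero_patterns_le_two_pow_nonneg_rank)
  then show ?thesis unfolding dim .
qed

theorem mainTheorem1:
  fixes N :: nat
  assumes "N > 0"
  shows "\<exists>(A :: real mat) n. A \<in> carrier_mat n n \<and> A\<^sup>T = A \<and> nonneg_mat A \<and>
           real_rank A = 3 \<and> num_neg_eigenvalues A = 1 \<and> nonneg_rank A > N"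
proof -
  define m :: nat where "m = 2 ^ N"
  define t where "t i = real i - real m" for i
  let ?n = "2 * m + 1" and ?A = "sq_sum_mat (2 * m + 1) t"
  have "m > 0" by (simp add: m_def)
  have odd: "t (?n - Suc i) = - t i" if "i < ?n" for i
    using that by (simp add: t_def)
  have "inj_on t {..<?n}" by (rule inj_onI) (simp add: t_def)
  then have "?n \<le> 2 ^ nonneg_rank ?A" using odd by (intro nonneg_rank_sq_sum_mat)
  moreover have "(2::nat) ^ N < ?n" by (simp add: m_def)
  ultimately have "(2::nat) ^ N < 2 ^ nonneg_rank ?A" by linarith
  moreover have "?A\<^sup>T = ?A" by (intro eq_matI) (auto simp: sq_sum_mat_def add.commute)
  moreover have "nonneg_mat ?A" by (simp add: nonneg_mat_def sq_sum_mat_def)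
  moreover have "real_rank ?A = 3"
    using \<open>m > 0\<close> rank_sq_sum_mat[of ?n t] by (simp add: real_rank_def sq_sum_mat_def t_def)
  moreover have "num_neg_eigenvalues ?A = 1"
    using \<open>m > 0\<close> by (intro num_neg_eigenvalues_sq_sum_mat[of ?n t, OF odd, of 0 m]) (auto simp: t_def)
  ultimately show ?thesis
    by (intro exI[of _ ?A] exI[of _ ?n]) (auto simp: sq_sum_mat_def)
qed

end
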